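(* Let $m\geq 4$, let $\mathcal{S}$ be a locating-dominating set of the grid graph $G_{2,m}=P_2\square P_m$, and let $\mathcal{B}$ be a $(2\times 4)$-block of $G_{2,m}$. Then $|\mathcal{B}\cap\mathcal{S}|\geq 2$.
   Context: $P_n$ is the path on $n$ vertices, $\square$ the Cartesian product of graphs, and $G_{n,m}=P_n\square P_m$ is viewed as a grid with $n$ rows and $m$ columns. A $(n\times \ell)$-block of $G_{n,m}$ ($1\le\ell\le m$) is the induced subgraph (or its vertex set) consisting of $\ell$ consecutive columns. For $C\subseteq V(G)$ and $v\in V(G)$ let $I(v)=N[v]\cap C$ ($N[v]$ the closed neighborhood). $C$ is a locating-dominating set if $I(v)\neq\emptyset$ for all $v\in V(G)\setminus C$ and $I(u)\neq I(v)$ for all distinct $u,v\in V(G)\setminus C$. *)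

theory Defs
  imports Main
begin

text \<open>Grid graph G_{n,m} = P_n \<box> P_m: vertices (i,j) with 1 \<le> i \<le> n (row), 1 \<le> j \<le> m (column).\<close>

definition grid_vertices :: "nat \<Rightarrow> nat \<Rightarrow> (nat \<times> nat) set" where
  "grid_vertices n m = {1..n} \<times> {1..m}"

definition grid_adj :: "nat \<times> nat \<Rightarrow> nat \<times> nat \<Rightarrow> bool" where
  "grid_adj u v \<longleftrightarrow>
     (fst u = fst v \<and> (snd u = snd v + 1 \<or> snd v = snd u + 1)) \<or>
     (snd u = snd v \<and> (fst u = fst v + 1 \<or> fst v = fst u + 1))"

definition grid_closed_nbhd :: "nat \<Rightarrow> nat \<Rightarrow> nat \<times> nat \<Rightarrow> (nat \<times> nat) set" where
  "grid_closed_nbhd n m v = {u \<in> grid_vertices n m. u = v \<or> grid_adj v u}"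

definition locating_dominating :: "nat \<Rightarrow> nat \<Rightarrow> (nat \<times> nat) set \<Rightarrow> bool" where
  "locating_dominating n m C \<longleftrightarrow>
     C \<subseteq> grid_vertices n m \<and>
     (\<forall>v \<in> grid_vertices n m - C. grid_closed_nbhd n m v \<inter> C \<noteq> {}) \<and>
     (\<forall>u \<in> grid_vertices n m - C. \<forall>v \<in> grid_vertices n m - C.
        u \<noteq> v \<longrightarrow> grid_closed_nbhd n m u \<inter> C \<noteq> grid_closed_nbhd n m v \<inter> C)"

text \<open>The (n \<times> l)-block consisting of columns j, ..., j+l-1 (requires 1 \<le> j, j+l-1 \<le> m).\<close>
definition grid_block :: "nat \<Rightarrow> nat \<Rightarrow> nat \<Rightarrow> (nat \<times> nat) set" where
  "grid_block n j l = {1..n} \<times> {j..<j+l}"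

end

theory Submission
  imports Defs
begin

text \<open>The vertices of the two middle columns of a block of width 4 have their closed
  neighbourhoods inside the block. If the block met S in at most one vertex, two of these
  (at least four) middle vertices would lie outside S; being dominated, both would have
  the same trace I(v) on S, namely that one vertex, contradicting location.\<close>

lemma two_le_card_Un:
  assumes "finite (A \<union> B)" and "A \<noteq> {}" and "B \<noteq> {}" and "A \<noteq> B"
  shows "2 \<le> card (A \<union> B)"
proof -
  obtain x y where "x \<in> A \<union> B" "y \<in> A \<union> B" "x \<noteq> y"
  proof -
    obtain a b where "a \<in> A" "b \<in> B"
      using assms(2,3) by blast
    moreover obtain c where "c \<in> A \<longleftrightarrow> c \<notin> B"
      using assms(4) by blast
    ultimately show thesis
      using that by (cases "a = c"; cases "b = c") auto
  qed
  then have "card {x, y} \<le> card (A \<union> B)"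
    by (intro card_mono assms(1)) auto
  with \<open>x \<noteq> y\<close> show ?thesis
    by simp
qed

lemma grid_closed_nbhd_subset_grid_block:
  assumes "j < c" and "c + 1 < j + l"
  shows "grid_closed_nbhd n m (r, c) \<subseteq> grid_block n j l"
  using assms by (auto simp: grid_closed_nbhd_def grid_vertices_def grid_adj_def grid_block_def)

lemma finite_grid_closed_nbhd: "finite (grid_closed_nbhd n m v)"
proof (rule finite_subset)
  show "grid_closed_nbhd n m v \<subseteq> grid_vertices n m"
    by (auto simp: grid_closed_nbhd_def)
qed (simp add: grid_vertices_def)

lemma locating_dominating_two_le_card_closed_nbhds:
  assumes ld: "locating_dominating n m C"
    and u: "u \<in> grid_vertices n m - C" and v: "v \<in> grid_vertices n m - C" and "u \<noteq> v"
  shows "2 \<le> card ((grid_closed_nbhd n m u \<union> grid_closed_nbhd n m v) \<inter> C)"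
proof -
  let ?I = "\<lambda>w. grid_closed_nbhd n m w \<inter> C"
  have "?I u \<noteq> {}" "?I v \<noteq> {}" "?I u \<noteq> ?I v"
    using ld u v \<open>u \<noteq> v\<close> unfolding locating_dominating_def by (metis (no_types, lifting))+
  then have "2 \<le> card (?I u \<union> ?I v)"
    by (intro two_le_card_Un) (simp_all add: finite_grid_closed_nbhd)
  then show ?thesis
    by (simp only: Int_Un_distrib2)
qed

lemma two_le_card_grid_block_inter_locating_dominating:
  assumes "2 \<le> n" and ld: "locating_dominating n m S" and "1 \<le> j" and "j + 3 \<le> m"
  shows "2 \<le> card (grid_block n j 4 \<inter> S)"
proof -
  define M where "M = {1..n} \<times> {j + 1, j + 2}"
  have finite_M: "finite M"
    by (simp add: M_def)
  have M_vertices: "M \<subseteq> grid_vertices n m"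
    using assms(3,4) by (auto simp: M_def grid_vertices_def)
  have M_block: "M \<subseteq> grid_block n j 4"
    by (auto simp: M_def grid_block_def)
  have M_nbhds: "grid_closed_nbhd n m w \<subseteq> grid_block n j 4" if "w \<in> M" for w
    using that unfolding M_def
    by (elim SigmaE insertE emptyE) (simp_all add: grid_closed_nbhd_subset_grid_block)
  have finite_block: "finite (grid_block n j 4 \<inter> S)"
    by (simp add: grid_block_def)
  show ?thesis
  proof (cases "2 \<le> card (M \<inter> S)")
    case True
    moreover have "card (M \<inter> S) \<le> card (grid_block n j 4 \<inter> S)"
      using M_block by (intro card_mono finite_block) blast
    ultimately show ?thesis
      by linarith
  next
    case False
    have "card M = 2 * n"
      by (simp add: M_def card_cartesian_product)
    moreover have "card (M - S) = card M - card (M \<inter> S)"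
      using finite_M by (intro card_Diff_subset_Int) simp
    ultimately have "2 \<le> card (M - S)"
      using False \<open>2 \<le> n\<close> by linarith
    then have "\<not> (\<forall>u \<in> M - S. \<forall>v \<in> M - S. u = v)"
      using finite_M card_le_Suc0_iff_eq[of "M - S"] by simp
    then obtain u v where uv: "u \<in> M - S" "v \<in> M - S" "u \<noteq> v"
      by blast
    have "grid_closed_nbhd n m u \<union> grid_closed_nbhd n m v \<subseteq> grid_block n j 4"
      using uv(1,2) M_nbhds by blast
    then have "card ((grid_closed_nbhd n m u \<union> grid_closed_nbhd n m v) \<inter> S)
        \<le> card (grid_block n j 4 \<inter> S)"
      by (intro card_mono finite_block) blast
    moreover have "2 \<le> card ((grid_closed_nbhd n m u \<union> grid_closed_nbhd n m v) \<inter> S)"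
      using uv M_vertices by (intro locating_dominating_two_le_card_closed_nbhds[OF ld]) auto
    ultimately show ?thesis
      by linarith
  qed
qed

theorem lemma4p3:
  fixes m j :: nat and S :: "(nat \<times> nat) set"
  assumes "m \<ge> 4"
    and "locating_dominating 2 m S"
    and "1 \<le> j" and "j + 3 \<le> m"
  shows "card (grid_block 2 j 4 \<inter> S) \<ge> 2"
  using two_le_card_grid_block_inter_locating_dominating[of 2] assms(2-4) by simp

end
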